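(* Let $n\ge 2$, $k\ge1$ and $I_*=(i_1,\dots,i_k)\in\{1,\dots,n-1\}^k$. Define the formal power series $$\mathcal{V}_{n,I_*}(t_1,\dots,t_k)=\sum_{(a_1,\dots,a_k)\in\mathbb{N}^k}V_n(x_{i_1}^{a_1}\cdots x_{i_k}^{a_k})\,t_1^{a_1}\cdots t_k^{a_k}.$$ Then it is the rational function $$\mathcal{V}_{n,I_*}(t_1,\dots,t_k)=\frac{1}{q(t_1)\cdots q(t_k)}\sum_{(j_1,\dots,j_k)\in\{0,1\}^k}Q_{j_1}(t_1)\cdots Q_{j_k}(t_k)\,V_n(x_{i_1}^{j_1}\cdots x_{i_k}^{j_k}),$$ where $q(t)=(1-s^3t)(1+st)$, $Q_0(t)=1-(s^3-s)t$ and $Q_1(t)=t$.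
   Context: $\mathcal{B}_n$ is the Artin braid group with standard generators $x_1,\dots,x_{n-1}$; $\widehat{\beta}$ is the closure of $\beta\in\mathcal{B}_n$. The Jones polynomial $V_L$ is normalized by $V(\text{unknot})=1$ and $q^{-1}V_{L_+}-qV_{L_-}=(q^{1/2}-q^{-1/2})V_{L_0}$; with $s=q^{-1/2}$ it is a Laurent polynomial in $s$, and $V_n(\beta)=V(\widehat\beta)$. Conventions: in a braid word, closures of $\alpha x_i^{e+2}\gamma$, $\alpha x_i^{e+1}\gamma$, $\alpha x_i^{e}\gamma$ play the roles of $L_-,L_0,L_+$ (e.g. $V_2(x_1^2)=-s-s^5$). $\mathbb{N}=\{0,1,2,\dots\}$. *)

theory Defs
  imports "HOL-Computational_Algebra.Polynomial" "HOL-Computational_Algebra.Formal_Laurent_Series"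
begin

text \<open>Coefficients live in Z[s,s^-1], realised inside the formal Laurent series over int.\<close>

abbreviation jS :: "int fls" where "jS \<equiv> fls_X"
abbreviation jSinv :: "int fls" where "jSinv \<equiv> fls_X_inv"

text \<open>A braid word is a list of nonzero integers: g > 0 stands for x_g, g < 0 for the inverse of x_(-g).
  A state assigns to every letter a smoothing: False = identity smoothing,
  True = cup-cap (Temperley-Lieb generator) smoothing.  The closure diagram of the
  resolved braid lives on the vertices (l,p), 0 <= l <= m, 1 <= p <= n, where m is the length
  of the word; letter c (0-based) sits between levels c and c+1.\<close>

definition braid_gen :: "int \<Rightarrow> nat" where
  "braid_gen g = nat \<bar>g\<bar>"

definition res_adj :: "nat \<Rightarrow> int list \<Rightarrow> bool list \<Rightarrow> nat \<times> nat \<Rightarrow> nat \<times> nat \<Rightarrow> bool" where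
  "res_adj n w st u v \<longleftrightarrow>
     (let m = length w in
      (\<comment> \<open>vertical strands through letter c\<close>
       (\<exists>c p. c < m \<and> 1 \<le> p \<and> p \<le> n \<and> u = (c, p) \<and> v = (Suc c, p) \<and>
              (\<not> st ! c \<or> (p \<noteq> braid_gen (w ! c) \<and> p \<noteq> Suc (braid_gen (w ! c)))))
     \<or> \<comment> \<open>cap above and cup below letter c when smoothed horizontally\<close>
       (\<exists>c. c < m \<and> st ! c \<and>
              ((u = (c, braid_gen (w ! c)) \<and> v = (c, Suc (braid_gen (w ! c))))
             \<or> (u = (Suc c, braid_gen (w ! c)) \<and> v = (Suc c, Suc (braid_gen (w ! c))))))
     \<or> \<comment> \<open>closure strands\<close>
       (\<exists>p. 1 \<le> p \<and> p \<le> n \<and> u = (m, p) \<and> v = (0, p))))"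

definition res_vertices :: "nat \<Rightarrow> int list \<Rightarrow> (nat \<times> nat) set" where
  "res_vertices n w = {0..length w} \<times> {1..n}"

definition num_loops :: "nat \<Rightarrow> int list \<Rightarrow> bool list \<Rightarrow> nat" where
  "num_loops n w st =
     card {C. \<exists>v \<in> res_vertices n w.
               C = {u. (\<lambda>x y. res_adj n w st x y \<or> res_adj n w st y x)\<^sup>*\<^sup>* v u}}"

text \<open>Weights of the two smoothings, already including the writhe normalisation
  (-A^3)^(-writhe) of the Kauffman bracket, with A^2 = s = q^(-1/2).  In the paper's convention
  x_i is the crossing playing the role of L_- in the skein relation.\<close>
definition smooth_wt :: "int \<Rightarrow> bool \<Rightarrow> int fls" where
  "smooth_wt g b =
     (if 0 < g then (if b then - (jS ^ 2) else - jS)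
      else (if b then - (jSinv ^ 2) else - jSinv))"

definition loop_val :: "int fls" where
  "loop_val = - jS - jSinv"

definition jones_braid :: "nat \<Rightarrow> int list \<Rightarrow> int fls" where
  "jones_braid n w =
     (\<Sum>st \<in> {st :: bool list. length st = length w}.
        (\<Prod>c < length w. smooth_wt (w ! c) (st ! c)) * loop_val ^ (num_loops n w st - 1))"

definition pow_word :: "nat list \<Rightarrow> nat list \<Rightarrow> int list" where
  "pow_word I a = concat (map (\<lambda>j. replicate (a ! j) (int (I ! j))) [0..<length I])"

text \<open>A series is a coefficient function on exponent vectors; only vectors of length k matter.\<close>
type_synonym 'a mps = "nat list \<Rightarrow> 'a"

definition mps_eq :: "nat \<Rightarrow> 'a mps \<Rightarrow> 'a mps \<Rightarrow> bool" where
  "mps_eq k f g \<longleftrightarrow> (\<forall>a. length a = k \<longrightarrow> f a = g a)"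

definition mps_mult :: "nat \<Rightarrow> ('a::comm_ring_1) mps \<Rightarrow> 'a mps \<Rightarrow> 'a mps" where
  "mps_mult k f g a =
     (\<Sum>b \<in> {b. length b = k \<and> (\<forall>j<k. b ! j \<le> a ! j)}.
        f b * g (map (\<lambda>j. a ! j - b ! j) [0..<k]))"

definition mps_one :: "nat \<Rightarrow> ('a::comm_ring_1) mps" where
  "mps_one k a = (if a = replicate k 0 then 1 else 0)"

definition mps_prod_list :: "nat \<Rightarrow> ('a::comm_ring_1) mps list \<Rightarrow> 'a mps" where
  "mps_prod_list k fs = foldr (mps_mult k) fs (mps_one k)"

definition mps_upoly :: "nat \<Rightarrow> nat \<Rightarrow> ('a::comm_ring_1) poly \<Rightarrow> 'a mps" where
  "mps_upoly k j p a = (if \<forall>l<k. l \<noteq> j \<longrightarrow> a ! l = 0 then coeff p (a ! j) else 0)"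

definition mps_smult :: "'a::comm_ring_1 \<Rightarrow> 'a mps \<Rightarrow> 'a mps" where
  "mps_smult c f a = c * f a"

definition jones_series :: "nat \<Rightarrow> nat list \<Rightarrow> int fls mps" where
  "jones_series n I a = jones_braid n (pow_word I a)"

definition q_poly :: "int fls poly" where
  "q_poly = [:1, - (jS ^ 3):] * [:1, jS:]"

definition Q_poly :: "nat \<Rightarrow> int fls poly" where
  "Q_poly j = (if j = 0 then [:1, - (jS ^ 3 - jS):] else [:0, 1:])"

end

theory Submission
  imports Defs
begin

text \<open>
  Every state of the Kauffman bracket state sum of a braid word assigns a smoothing to each
  letter, and the loops of the smoothed closure are the connected components of a finite graph.
  For a letter occurring twice in a row, the four states of the pair reduce to states of the
  shorter words: an identity smoothing can be deleted without changing the loop count, and two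
  consecutive cup-cap smoothings of the same generator differ from a single one by exactly one
  small circle.  Summing over the remaining letters gives the skein recurrence
  \<open>V(\<alpha>x\<^sup>2\<gamma>) = (s\<^sup>3 - s) V(\<alpha>x\<gamma>) + s\<^sup>4 V(\<alpha>\<gamma>)\<close>, whose characteristic polynomial is \<open>q\<close>.
  A sequence satisfying this recurrence has generating function \<open>(G\<^sub>0 Q\<^sub>0 + G\<^sub>1 Q\<^sub>1)/q\<close>, and since the
  coefficients of the series satisfy the recurrence in each exponent separately, the identity
  multiplies out variable by variable.
\<close>

section \<open>Counting connected components\<close>

definition components :: "('a \<Rightarrow> 'a \<Rightarrow> bool) \<Rightarrow> 'a set \<Rightarrow> 'a set set" where
  "components R V = (\<lambda>v. {u. equivclp R v u}) ` V"

lemma card_image_eq_if_same_kernel: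
  assumes "\<And>x y. x \<in> V \<Longrightarrow> y \<in> V \<Longrightarrow> f x = f y \<longleftrightarrow> g x = g y"
  shows "card (f ` V) = card (g ` V)"
proof -
  define P where "P = (\<lambda>x. (f x, g x)) ` V"
  have "inj_on fst P" "inj_on snd P"
    using assms by (auto simp: P_def inj_on_def)
  then have "card (fst ` P) = card (snd ` P)"
    by (simp add: card_image)
  then show ?thesis
    by (simp add: P_def image_image)
qed

lemma equivclp_class_eq_iff: "{u. equivclp R v u} = {u. equivclp R w u} \<longleftrightarrow> equivclp R v w"
proof
  assume "{u. equivclp R v u} = {u. equivclp R w u}"
  moreover have "w \<in> {u. equivclp R w u}" by simp
  ultimately show "equivclp R v w" by blast
next
  assume "equivclp R v w"
  moreover from this have "equivclp R w v" by (rule equivclp_sym)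
  ultimately show "{u. equivclp R v u} = {u. equivclp R w u}"
    by (auto dest: equivclp_trans)
qed

lemma equivclp_closed:
  assumes "\<And>x y. R x y \<Longrightarrow> x \<in> V \<longleftrightarrow> y \<in> V" "equivclp R x y" "x \<in> V"
  shows "y \<in> V"
  using assms(2,3) by (induction rule: equivclp_induct) (use assms(1) in blast)+

lemma equivclp_map:
  assumes "\<And>x y. x \<in> V \<Longrightarrow> R x y \<Longrightarrow> equivclp R' (f x) (f y)"
    and "\<And>x y. R x y \<Longrightarrow> x \<in> V \<longleftrightarrow> y \<in> V"
    and "equivclp R x y" "x \<in> V"
  shows "equivclp R' (f x) (f y)"
  using assms(3,4)
proof (induction rule: equivclp_induct)
  case (step y z)
  have "y \<in> V" using equivclp_closed[OF assms(2) step.hyps(1) step.prems] .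
  with step assms(1,2) show ?case
    by (metis equivclp_sym equivclp_trans)
qed simp

lemma equivclp_reflect:
  assumes closed: "\<And>x y. R' x y \<Longrightarrow> x \<in> V' \<longleftrightarrow> y \<in> V'"
    and lift: "\<And>x' y'. x' \<in> V' \<Longrightarrow> R' x' y' \<Longrightarrow> \<exists>x\<in>V. \<exists>y\<in>V. f x = x' \<and> f y = y' \<and> equivclp R x y"
    and fibre: "\<And>x y. x \<in> V \<Longrightarrow> y \<in> V \<Longrightarrow> f x = f y \<Longrightarrow> equivclp R x y"
    and "equivclp R' x' y'" "x' \<in> V'"
  shows "\<forall>x\<in>V. \<forall>y\<in>V. f x = x' \<longrightarrow> f y = y' \<longrightarrow> equivclp R x y"
  using assms(4,5)
proof (induction rule: equivclp_induct)
  case base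
  show ?case using fibre by force
next
  case (step y' z')
  have "y' \<in> V'" using equivclp_closed[OF closed step.hyps(1) step.prems] .
  then have "z' \<in> V'" using step.hyps(2) closed by blast
  obtain y0 z0 where y0z0: "y0 \<in> V" "z0 \<in> V" "f y0 = y'" "f z0 = z'" "equivclp R y0 z0"
    using step.hyps(2)
  proof
    assume "R' y' z'"
    then show thesis using lift[OF \<open>y' \<in> V'\<close>] that by blast
  next
    assume "R' z' y'"
    then show thesis using lift[OF \<open>z' \<in> V'\<close>] that by (blast intro: equivclp_sym)
  qed
  show ?case
  proof (intro ballI impI)
    fix x z assume "x \<in> V" "z \<in> V" "f x = x'" "f z = z'"
    then have "equivclp R x y0" "equivclp R z0 z"
      using step.IH step.prems y0z0 fibre by auto
    then show "equivclp R x z"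
      using y0z0(5) by (blast intro: equivclp_trans)
  qed
qed

lemma card_components_contract:
  assumes closed: "\<And>x y. R x y \<Longrightarrow> x \<in> V \<longleftrightarrow> y \<in> V"
    and closed': "\<And>x y. R' x y \<Longrightarrow> x \<in> V' \<longleftrightarrow> y \<in> V'"
    and onto: "f ` V = V'"
    and push: "\<And>x y. x \<in> V \<Longrightarrow> R x y \<Longrightarrow> equivclp R' (f x) (f y)"
    and lift: "\<And>x' y'. x' \<in> V' \<Longrightarrow> R' x' y' \<Longrightarrow> \<exists>x\<in>V. \<exists>y\<in>V. f x = x' \<and> f y = y' \<and> equivclp R x y"
    and fibre: "\<And>x y. x \<in> V \<Longrightarrow> y \<in> V \<Longrightarrow> f x = f y \<Longrightarrow> equivclp R x y"
  shows "card (components R V) = card (components R' V')"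
proof -
  have "equivclp R x y \<longleftrightarrow> equivclp R' (f x) (f y)" if "x \<in> V" "y \<in> V" for x y
  proof
    assume "equivclp R x y"
    from equivclp_map[where f = f and R' = R', OF push closed this that(1)]
    show "equivclp R' (f x) (f y)" .
  next
    assume "equivclp R' (f x) (f y)"
    moreover have "f x \<in> V'" using onto that(1) by blast
    ultimately show "equivclp R x y"
      using equivclp_reflect[where f = f and R = R, OF closed' lift fibre] that by blast
  qed
  then have "card ((\<lambda>v. {u. equivclp R v u}) ` V) = card ((\<lambda>v. {u. equivclp R' (f v) u}) ` V)"
    by (intro card_image_eq_if_same_kernel) (simp add: equivclp_class_eq_iff)
  then show ?thesis
    by (simp add: components_def onto[symmetric] image_image)
qed

lemma card_components_remove:
  assumes "finite V" "L \<subseteq> V" "v \<in> L"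
    and closed: "\<And>x y. R x y \<Longrightarrow> x \<in> L \<longleftrightarrow> y \<in> L"
    and connected: "\<And>x. x \<in> L \<Longrightarrow> equivclp R v x"
  shows "card (components R V) = card (components R (V - L)) + 1"
proof -
  have class_L: "{u. equivclp R x u} = L" if "x \<in> L" for x
  proof (intro set_eqI iffI)
    fix u assume "u \<in> {u. equivclp R x u}"
    then show "u \<in> L" using equivclp_closed[OF closed _ that] by blast
  next
    fix u assume "u \<in> L"
    then show "u \<in> {u. equivclp R x u}"
      using connected[OF that] connected[OF \<open>u \<in> L\<close>] by (blast intro: equivclp_trans equivclp_sym)
  qed
  have "components R V = insert L (components R (V - L))"
    using assms(2,3) class_L by (auto simp: components_def)
  moreover have "L \<notin> components R (V - L)"
    by (auto simp: components_def)
  ultimately show ?thesis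
    using assms(1) by (simp add: components_def)
qed

text \<open>The adjacency relation res_adj with the word and the state replaced by arbitrary generator
  and smoothing functions \<open>G\<close>, \<open>B\<close> on the letter positions, so that letters can be inserted.\<close>

definition letter_edge :: "nat \<Rightarrow> nat \<Rightarrow> bool \<Rightarrow> nat \<Rightarrow> nat \<times> nat \<Rightarrow> nat \<times> nat \<Rightarrow> bool" where
  "letter_edge n g b c u v \<longleftrightarrow>
     (\<exists>p. 1 \<le> p \<and> p \<le> n \<and> \<not> (b \<and> (p = g \<or> p = Suc g)) \<and> u = (c, p) \<and> v = (Suc c, p)) \<or>
     (b \<and> (u = (c, g) \<and> v = (c, Suc g) \<or> u = (Suc c, g) \<and> v = (Suc c, Suc g)))"

definition resolution_edge ::
    "nat \<Rightarrow> nat \<Rightarrow> (nat \<Rightarrow> nat) \<Rightarrow> (nat \<Rightarrow> bool) \<Rightarrow> nat \<times> nat \<Rightarrow> nat \<times> nat \<Rightarrow> bool" where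
  "resolution_edge n m G B u v \<longleftrightarrow>
     (\<exists>c<m. letter_edge n (G c) (B c) c u v) \<or> (\<exists>p. 1 \<le> p \<and> p \<le> n \<and> u = (m, p) \<and> v = (0, p))"

definition diagram_vertices :: "nat \<Rightarrow> nat \<Rightarrow> (nat \<times> nat) set" where
  "diagram_vertices n m = {0..m} \<times> {1..n}"

lemma resolution_edgeE [consumes 1, case_names letter closing]:
  assumes "resolution_edge n m G B u v"
  obtains (letter) c where "c < m" "letter_edge n (G c) (B c) c u v"
    | (closing) p where "1 \<le> p" "p \<le> n" "u = (m, p)" "v = (0, p)"
  using assms unfolding resolution_edge_def by blast

lemma res_adj_eq_resolution_edge:
  "res_adj n w st = resolution_edge n (length w) (\<lambda>c. braid_gen (w ! c)) (\<lambda>c. st ! c)"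
  unfolding res_adj_def resolution_edge_def letter_edge_def Let_def by (intro ext) blast

lemma num_loops_eq_card_components:
  "num_loops n w st = card (components (resolution_edge n (length w) (\<lambda>c. braid_gen (w ! c)) (\<lambda>c. st ! c))
                                      (diagram_vertices n (length w)))"
proof -
  have "(\<lambda>x y. res_adj n w st x y \<or> res_adj n w st y x) = symclp (res_adj n w st)"
    by (simp add: symclp_def fun_eq_iff)
  then show ?thesis
    unfolding num_loops_def res_vertices_def diagram_vertices_def components_def equivclp_def
    by (simp only: res_adj_eq_resolution_edge) (rule arg_cong[where f = card], blast)
qed

lemma num_loops_pos:
  assumes "1 \<le> n" shows "1 \<le> num_loops n w st"
proof -
  have "(0, 1) \<in> diagram_vertices n (length w)"
    using assms by (simp add: diagram_vertices_def)
  then show ?thesis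
    unfolding num_loops_eq_card_components components_def
    by (simp add: Suc_le_eq card_gt_0_iff diagram_vertices_def)
qed

lemma letter_edge_levels:
  "letter_edge n g b c u v \<Longrightarrow> fst u \<in> {c, Suc c} \<and> fst v \<in> {c, Suc c}"
  by (auto simp: letter_edge_def)

lemma resolution_edge_vertices:
  assumes "\<forall>c<m. B c \<longrightarrow> 1 \<le> G c \<and> G c < n" "resolution_edge n m G B u v"
  shows "u \<in> diagram_vertices n m \<and> v \<in> diagram_vertices n m"
  using assms unfolding resolution_edge_def letter_edge_def diagram_vertices_def by fastforce

lemma resolution_edge_closed:
  assumes "\<forall>c<m. B c \<longrightarrow> 1 \<le> G c \<and> G c < n" "resolution_edge n m G B u v"
  shows "u \<in> diagram_vertices n m \<longleftrightarrow> v \<in> diagram_vertices n m"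
  using resolution_edge_vertices[OF assms] by blast

section \<open>Inserting a letter\<close>

definition insert_at :: "nat \<Rightarrow> 'a \<Rightarrow> (nat \<Rightarrow> 'a) \<Rightarrow> nat \<Rightarrow> 'a" where
  "insert_at d x f i = (if i < d then f i else if i = d then x else f (i - 1))"

lemma nth_append_Cons_eq_insert_at:
  "length xs = d \<Longrightarrow> (\<lambda>c. f ((xs @ x # ys) ! c)) = insert_at d (f x) (\<lambda>c. f ((xs @ ys) ! c))"
  by (auto simp: insert_at_def nth_append fun_eq_iff nth_Cons' split: nat.split)

lemma insert_at_bounded:
  assumes "\<forall>c<m. B c \<longrightarrow> 1 \<le> G c \<and> G c < n" "b \<longrightarrow> 1 \<le> g \<and> g < n" "d \<le> m"
  shows "\<forall>c<Suc m. insert_at d b B c \<longrightarrow> 1 \<le> insert_at d g G c \<and> insert_at d g G c < n"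
  using assms by (auto simp: insert_at_def)

text \<open>Identifies the two levels bounding the inserted letter \<open>d\<close>.\<close>

definition collapse :: "nat \<Rightarrow> nat \<times> nat \<Rightarrow> nat \<times> nat" where
  "collapse d = apfst (\<lambda>l. if l \<le> d then l else l - 1)"

lemma letter_edge_collapse_below:
  "letter_edge n g b c u v \<Longrightarrow> c < d \<Longrightarrow> collapse d u = u \<and> collapse d v = v"
  by (auto simp: letter_edge_def collapse_def)

lemma letter_edge_collapse_above:
  "letter_edge n g b c u v \<Longrightarrow> d < c \<Longrightarrow> letter_edge n g b (c - 1) (collapse d u) (collapse d v)"
  by (auto simp: letter_edge_def collapse_def)

lemma letter_edge_shift:
  "letter_edge n g b c u v \<Longrightarrow> letter_edge n g b (Suc c) (apfst Suc u) (apfst Suc v)"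
  by (auto simp: letter_edge_def)

lemma letter_edge_collapse_shift:
  "letter_edge n g b c u v \<Longrightarrow> d \<le> c \<Longrightarrow> collapse d (apfst Suc u) = u \<and> collapse d (apfst Suc v) = v"
  by (auto simp: letter_edge_def collapse_def)

lemma collapse_image:
  assumes "d \<le> m"
  shows "collapse d ` diagram_vertices n (Suc m) = diagram_vertices n m"
proof (intro equalityI subsetI)
  fix x assume "x \<in> diagram_vertices n m"
  then obtain l p where x: "x = (l, p)" "l \<le> m" "p \<in> {1..n}" by (auto simp: diagram_vertices_def)
  let ?y = "if l \<le> d then (l, p) else (Suc l, p)"
  have "?y \<in> diagram_vertices n (Suc m)" "collapse d ?y = x"
    using x by (auto simp: diagram_vertices_def collapse_def)
  then show "x \<in> collapse d ` diagram_vertices n (Suc m)" by (metis image_eqI)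
qed (use assms in \<open>auto simp: diagram_vertices_def collapse_def\<close>)

lemma collapse_eq_cases:
  assumes "collapse d x = collapse d y" "x \<noteq> y"
  obtains p where "x = (d, p) \<and> y = (Suc d, p) \<or> x = (Suc d, p) \<and> y = (d, p)"
proof -
  obtain l1 p1 l2 p2 where xy: "x = (l1, p1)" "y = (l2, p2)" by fastforce
  then have "p1 = p2" "l1 \<noteq> l2" "(if l1 \<le> d then l1 else l1 - 1) = (if l2 \<le> d then l2 else l2 - 1)"
    using assms by (auto simp: collapse_def)
  then have "l1 = d \<and> l2 = Suc d \<or> l1 = Suc d \<and> l2 = d"
    by (auto split: if_splits)
  then show thesis using that xy \<open>p1 = p2\<close> by blast
qed

lemma resolution_edge_insert_cases:
  assumes "d \<le> m" "resolution_edge n (Suc m) (insert_at d g G) (insert_at d b B) u v"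
  shows "letter_edge n g b d u v \<or> resolution_edge n m G B (collapse d u) (collapse d v)"
  using assms(2)
proof (cases rule: resolution_edgeE)
  case (letter c)
  note e = letter(2)
  consider "c < d" | "c = d" | "d < c" by linarith
  then show ?thesis
  proof cases
    case 1
    then have "resolution_edge n m G B u v"
      using e assms(1) unfolding resolution_edge_def by (intro disjI1 exI[of _ c]) (simp add: insert_at_def)
    then show ?thesis
      using letter_edge_collapse_below[OF e 1] by simp
  next
    case 2
    then show ?thesis using e by (simp add: insert_at_def)
  next
    case 3
    then have "c - 1 < m" "\<not> c < d" "c \<noteq> d" using letter(1) by auto
    then show ?thesis
      using letter_edge_collapse_above[OF e 3] unfolding resolution_edge_def
      by (intro disjI2 disjI1 exI[of _ "c - 1"]) (simp add: insert_at_def)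
  qed
next
  case closing
  then show ?thesis using assms(1) by (auto simp: resolution_edge_def collapse_def)
qed

lemma resolution_edge_insert_letter:
  "d \<le> m \<Longrightarrow> letter_edge n g b d u v \<Longrightarrow> resolution_edge n (Suc m) (insert_at d g G) (insert_at d b B) u v"
  unfolding resolution_edge_def by (intro disjI1 exI[of _ d]) (simp add: insert_at_def)

lemma resolution_edge_insert_below:
  assumes "c < d" "d \<le> m" "letter_edge n (G c) (B c) c u v"
  shows "resolution_edge n (Suc m) (insert_at d g G) (insert_at d b B) u v"
  using assms unfolding resolution_edge_def by (intro disjI1 exI[of _ c]) (simp add: insert_at_def)

lemma resolution_edge_insert_above:
  assumes "d \<le> c" "c < m" "letter_edge n (G c) (B c) c u v"
  shows "resolution_edge n (Suc m) (insert_at d g G) (insert_at d b B) (apfst Suc u) (apfst Suc v)"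
  using assms letter_edge_shift[OF assms(3)] unfolding resolution_edge_def
  by (intro disjI1 exI[of _ "Suc c"]) (simp add: insert_at_def)

lemma resolution_edge_insert_closing:
  assumes "d \<le> m" "1 \<le> p" "p \<le> n"
  shows "resolution_edge n (Suc m) G' B' (Suc m, p) (0, p) \<and> collapse d (Suc m, p) = (m, p) \<and> collapse d (0, p) = (0, p)"
  using assms by (auto simp: resolution_edge_def collapse_def)

lemma resolution_edge_lift:
  assumes "d \<le> m" "resolution_edge n m G B u' v'"
  shows "\<exists>u v. resolution_edge n (Suc m) (insert_at d g G) (insert_at d b B) u v \<and>
                 collapse d u = u' \<and> collapse d v = v'"
  using assms(2)
proof (cases rule: resolution_edgeE)
  case (letter c)
  show ?thesis
  proof (cases "c < d")
    case True
    then show ?thesis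
      using resolution_edge_insert_below[where G = G and B = B, OF True assms(1) letter(2)]
        letter_edge_collapse_below[OF letter(2) True]
      by blast
  next
    case False
    then show ?thesis
      using resolution_edge_insert_above[where G = G and B = B, OF _ letter] letter_edge_collapse_shift[OF letter(2)]
      by (meson not_less)
  qed
next
  case closing
  then show ?thesis using resolution_edge_insert_closing[OF assms(1)] by blast
qed

lemma card_components_insert_identity:
  assumes "d \<le> m" and bounded: "\<forall>c<m. B c \<longrightarrow> 1 \<le> G c \<and> G c < n"
  shows "card (components (resolution_edge n (Suc m) (insert_at d g G) (insert_at d False B))
                          (diagram_vertices n (Suc m)))
       = card (components (resolution_edge n m G B) (diagram_vertices n m))"
proof (rule card_components_contract[where f = "collapse d"])
  have bounded': "\<forall>c<Suc m. insert_at d False B c \<longrightarrow> 1 \<le> insert_at d g G c \<and> insert_at d g G c < n"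
    using insert_at_bounded[OF bounded, of False g d] assms(1) by simp
  then show "\<And>x y. resolution_edge n (Suc m) (insert_at d g G) (insert_at d False B) x y \<Longrightarrow>
      x \<in> diagram_vertices n (Suc m) \<longleftrightarrow> y \<in> diagram_vertices n (Suc m)"
    by (rule resolution_edge_closed)
  show "\<And>x y. resolution_edge n m G B x y \<Longrightarrow> x \<in> diagram_vertices n m \<longleftrightarrow> y \<in> diagram_vertices n m"
    using bounded by (rule resolution_edge_closed)
  show "collapse d ` diagram_vertices n (Suc m) = diagram_vertices n m"
    using assms(1) by (rule collapse_image)
  show "equivclp (resolution_edge n m G B) (collapse d x) (collapse d y)"
    if "resolution_edge n (Suc m) (insert_at d g G) (insert_at d False B) x y" for x y
    using resolution_edge_insert_cases[OF assms(1) that]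
    by (auto simp: letter_edge_def collapse_def)
  show "\<exists>x\<in>diagram_vertices n (Suc m). \<exists>y\<in>diagram_vertices n (Suc m). collapse d x = x' \<and> collapse d y = y' \<and>
          equivclp (resolution_edge n (Suc m) (insert_at d g G) (insert_at d False B)) x y"
    if small: "resolution_edge n m G B x' y'" for x' y'
  proof -
    obtain x y where "resolution_edge n (Suc m) (insert_at d g G) (insert_at d False B) x y"
        "collapse d x = x'" "collapse d y = y'"
      using resolution_edge_lift[OF assms(1) small] by blast
    then show ?thesis
      using resolution_edge_vertices[OF bounded'] by blast
  qed
  show "equivclp (resolution_edge n (Suc m) (insert_at d g G) (insert_at d False B)) x y"
    if xy: "x \<in> diagram_vertices n (Suc m)" "y \<in> diagram_vertices n (Suc m)" "collapse d x = collapse d y"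
    for x y
  proof (cases "x = y")
    case False
    with xy(3) obtain p where "x = (d, p) \<and> y = (Suc d, p) \<or> x = (Suc d, p) \<and> y = (d, p)"
      by (rule collapse_eq_cases)
    moreover have "p \<in> {1..n}" using xy calculation by (auto simp: diagram_vertices_def)
    ultimately show ?thesis
      using resolution_edge_insert_letter[OF assms(1), of n g False _ _ G B]
      by (auto simp: letter_edge_def)
  qed simp
qed

text \<open>Inserting a copy of a cup-cap smoothed letter \<open>d\<close> in front of it: the cup of the first
  copy and the cap of the second one close up to a circle at level \<open>d + 1\<close>.\<close>

definition double_loop :: "nat \<Rightarrow> nat \<Rightarrow> (nat \<times> nat) set" where
  "double_loop d g = {(Suc d, g), (Suc d, Suc g)}"

lemma resolution_edge_double_loop_closed:
  assumes "d < m" "B d"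
    and "resolution_edge n (Suc m) (insert_at d (G d) G) (insert_at d True B) x y"
  shows "x \<in> double_loop d (G d) \<longleftrightarrow> y \<in> double_loop d (G d)"
  using assms(3)
proof (cases rule: resolution_edgeE)
  case (letter c)
  consider "c = d" | "c = Suc d" | "c \<noteq> d" "c \<noteq> Suc d" by blast
  then show ?thesis
  proof cases
    case 1
    then show ?thesis using letter(2) by (auto simp: letter_edge_def insert_at_def double_loop_def)
  next
    case 2
    then show ?thesis using letter(2) assms(2) by (auto simp: letter_edge_def insert_at_def double_loop_def)
  next
    case 3
    then show ?thesis using letter_edge_levels[OF letter(2)] by (auto simp: double_loop_def)
  qed
qed (use assms(1) in \<open>auto simp: double_loop_def\<close>)

lemma resolution_edge_lift_avoiding_loop:
  assumes "d < m" "B d" "resolution_edge n m G B u' v'"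
  shows "\<exists>u v. resolution_edge n (Suc m) (insert_at d (G d) G) (insert_at d True B) u v \<and>
                 collapse d u = u' \<and> collapse d v = v' \<and> u \<notin> double_loop d (G d) \<and> v \<notin> double_loop d (G d)"
  using assms(3)
proof (cases rule: resolution_edgeE)
  case (letter c)
  note e = letter(2)
  let ?R = "resolution_edge n (Suc m) (insert_at d (G d) G) (insert_at d True B)"
    and ?L = "double_loop d (G d)"
  consider "c < d" | "d < c" | "c = d" "u' = (d, G d)" "v' = (d, Suc (G d))"
    | "c = d" "(u', v') \<noteq> ((d, G d), (d, Suc (G d)))"
    by fastforce
  then show ?thesis
  proof cases
    case 1
    have "?R u' v'"
      using resolution_edge_insert_below[where G = G and B = B, OF 1 _ e] assms(1) by simp
    moreover have "u' \<notin> ?L \<and> v' \<notin> ?L"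
      using 1 letter_edge_levels[OF e] by (auto simp: double_loop_def)
    ultimately show ?thesis
      using letter_edge_collapse_below[OF e 1] by blast
  next
    case 2
    have "?R (apfst Suc u') (apfst Suc v')"
      using resolution_edge_insert_above[where G = G and B = B, OF _ letter(1) e] 2 by simp
    moreover have "apfst Suc u' \<notin> ?L \<and> apfst Suc v' \<notin> ?L"
      using 2 letter_edge_levels[OF e] by (cases u'; cases v') (auto simp: double_loop_def)
    ultimately show ?thesis
      using letter_edge_collapse_shift[OF e] 2 by (meson less_imp_le)
  next
    case 3 \<comment> \<open>the cap of letter \<open>d\<close> must be lifted to the first copy, not shifted into the loop\<close>
    then have "letter_edge n (G d) True d u' v'" by (simp add: letter_edge_def)
    then have "?R u' v'"
      using resolution_edge_insert_letter assms(1) by simp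
    moreover have "collapse d u' = u' \<and> collapse d v' = v' \<and> u' \<notin> ?L \<and> v' \<notin> ?L"
      using 3 by (simp add: double_loop_def collapse_def)
    ultimately show ?thesis by blast
  next
    case 4
    then have "?R (apfst Suc u') (apfst Suc v')"
      using resolution_edge_insert_above[where G = G and B = B, OF _ letter(1) e] by simp
    moreover have "apfst Suc u' \<notin> ?L \<and> apfst Suc v' \<notin> ?L"
      using e 4 assms(2) by (auto simp: letter_edge_def double_loop_def)
    ultimately show ?thesis
      using letter_edge_collapse_shift[OF e] 4 by blast
  qed
next
  case (closing p)
  then have "resolution_edge n (Suc m) (insert_at d (G d) G) (insert_at d True B) (Suc m, p) (0, p)"
    "collapse d (Suc m, p) = u'" "collapse d (0, p) = v'"
    using resolution_edge_insert_closing[of d m p n] assms(1) by auto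
  moreover have "(Suc m, p) \<notin> double_loop d (G d)" "(0, p) \<notin> double_loop d (G d)"
    using assms(1) by (auto simp: double_loop_def)
  ultimately show ?thesis by blast
qed

lemma card_components_collapse_double:
  assumes "d < m" "B d" and bounded: "\<forall>c<m. B c \<longrightarrow> 1 \<le> G c \<and> G c < n"
  defines "R \<equiv> resolution_edge n (Suc m) (insert_at d (G d) G) (insert_at d True B)"
    and "V \<equiv> diagram_vertices n (Suc m) - double_loop d (G d)"
  shows "card (components R V) = card (components (resolution_edge n m G B) (diagram_vertices n m))"
proof (rule card_components_contract[where f = "collapse d"])
  let ?L = "double_loop d (G d)"
  have bounded': "\<forall>c<Suc m. insert_at d True B c \<longrightarrow> 1 \<le> insert_at d (G d) G c \<and> insert_at d (G d) G c < n"
    using insert_at_bounded[OF bounded, of True "G d" d] bounded assms(1,2) by simp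
  have L_closed: "x \<in> ?L \<longleftrightarrow> y \<in> ?L" if "R x y" for x y
    using resolution_edge_double_loop_closed[where B = B, OF assms(1,2)] that by (simp add: R_def)
  show V_closed: "x \<in> V \<longleftrightarrow> y \<in> V" if "R x y" for x y
    using resolution_edge_closed[OF bounded'] L_closed[OF that] that by (auto simp: R_def V_def)
  show "\<And>x y. resolution_edge n m G B x y \<Longrightarrow> x \<in> diagram_vertices n m \<longleftrightarrow> y \<in> diagram_vertices n m"
    using bounded by (rule resolution_edge_closed)
  have "collapse d ` ?L \<subseteq> collapse d ` V"
  proof
    fix x assume "x \<in> collapse d ` ?L"
    then obtain p where "x = (d, p)" "(Suc d, p) \<in> ?L" by (auto simp: double_loop_def collapse_def)
    moreover have "(d, p) \<in> V" "collapse d (d, p) = (d, p)"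
      using calculation bounded assms(1,2) by (auto simp: double_loop_def V_def diagram_vertices_def collapse_def)
    ultimately show "x \<in> collapse d ` V" by (metis image_eqI)
  qed
  then have "collapse d ` V = collapse d ` diagram_vertices n (Suc m)"
    unfolding V_def by blast
  then show "collapse d ` V = diagram_vertices n m"
    using collapse_image[of d m n] assms(1) by simp
  show "equivclp (resolution_edge n m G B) (collapse d x) (collapse d y)" if edge: "x \<in> V" "R x y" for x y
  proof -
    have "x \<notin> ?L" "y \<notin> ?L" using edge L_closed by (auto simp: V_def)
    from resolution_edge_insert_cases[of d m n "G d" G True B x y] edge(2) assms(1)
    consider "letter_edge n (G d) True d x y" | "resolution_edge n m G B (collapse d x) (collapse d y)"
      unfolding R_def by linarith
    then show ?thesis
    proof cases
      case 1
      have "resolution_edge n m G B (d, G d) (d, Suc (G d))"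
        unfolding resolution_edge_def letter_edge_def using assms(1,2) by blast
      then show ?thesis
        using 1 \<open>x \<notin> ?L\<close> \<open>y \<notin> ?L\<close> by (auto simp: letter_edge_def double_loop_def collapse_def)
    qed blast
  qed
  show "\<exists>x\<in>V. \<exists>y\<in>V. collapse d x = x' \<and> collapse d y = y' \<and> equivclp R x y"
    if small: "resolution_edge n m G B x' y'" for x' y'
  proof -
    obtain x y where xy: "R x y" "collapse d x = x'" "collapse d y = y'" "x \<notin> ?L" "y \<notin> ?L"
      using resolution_edge_lift_avoiding_loop[where B = B, OF assms(1,2) small] by (auto simp: R_def)
    moreover have "x \<in> V" "y \<in> V"
      using resolution_edge_vertices[OF bounded'] xy by (auto simp: R_def V_def)
    ultimately show ?thesis by blast
  qed
  show "equivclp R x y" if xy: "x \<in> V" "y \<in> V" "collapse d x = collapse d y" for x y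
  proof (cases "x = y")
    case False
    with xy(3) obtain p where "x = (d, p) \<and> y = (Suc d, p) \<or> x = (Suc d, p) \<and> y = (d, p)"
      by (rule collapse_eq_cases)
    moreover have "p \<in> {1..n}" "p \<noteq> G d" "p \<noteq> Suc (G d)"
      using xy calculation by (auto simp: V_def double_loop_def diagram_vertices_def)
    moreover have "R (d, p) (Suc d, p)"
      unfolding R_def using assms(1) calculation(2-4)
      by (intro resolution_edge_insert_letter) (auto simp: letter_edge_def)
    ultimately show ?thesis by auto
  qed simp
qed

lemma card_components_insert_double:
  assumes "d < m" "B d" and bounded: "\<forall>c<m. B c \<longrightarrow> 1 \<le> G c \<and> G c < n"
  shows "card (components (resolution_edge n (Suc m) (insert_at d (G d) G) (insert_at d True B))
                          (diagram_vertices n (Suc m)))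
       = card (components (resolution_edge n m G B) (diagram_vertices n m)) + 1"
proof -
  let ?R = "resolution_edge n (Suc m) (insert_at d (G d) G) (insert_at d True B)"
  have cup: "?R (Suc d, G d) (Suc d, Suc (G d))"
    using assms(1) by (intro resolution_edge_insert_letter) (auto simp: letter_edge_def)
  have "card (components ?R (diagram_vertices n (Suc m)))
      = card (components ?R (diagram_vertices n (Suc m) - double_loop d (G d))) + 1"
  proof (rule card_components_remove[where v = "(Suc d, G d)"])
    show "double_loop d (G d) \<subseteq> diagram_vertices n (Suc m)"
      using bounded assms by (auto simp: double_loop_def diagram_vertices_def)
    show "equivclp ?R (Suc d, G d) x" if "x \<in> double_loop d (G d)" for x
      using that cup by (auto simp: double_loop_def)
  qed (use resolution_edge_double_loop_closed[where B = B, OF assms(1,2)] in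
       \<open>auto simp: double_loop_def diagram_vertices_def\<close>)
  then show ?thesis
    using card_components_collapse_double[OF assms] by simp
qed

lemma num_loops_insert_identity:
  assumes "length sa = length xs" and bounded: "\<forall>y \<in> set (xs @ ys). 1 \<le> braid_gen y \<and> braid_gen y < n"
  shows "num_loops n (xs @ x # ys) (sa @ False # sb) = num_loops n (xs @ ys) (sa @ sb)"
proof -
  have "\<forall>c<length (xs @ ys). 1 \<le> braid_gen ((xs @ ys) ! c) \<and> braid_gen ((xs @ ys) ! c) < n"
    using bounded unfolding all_set_conv_all_nth .
  then show ?thesis
    unfolding num_loops_eq_card_components
    using card_components_insert_identity[of "length xs" "length (xs @ ys)" "\<lambda>c. (sa @ sb) ! c"
        "\<lambda>c. braid_gen ((xs @ ys) ! c)" n "braid_gen x"]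
      nth_append_Cons_eq_insert_at[of sa "length xs" "\<lambda>b. b" False sb]
    by (simp add: nth_append_Cons_eq_insert_at assms(1))
qed

lemma num_loops_insert_double:
  assumes "length sa = length xs" and bounded: "\<forall>y \<in> set (xs @ x # ys). 1 \<le> braid_gen y \<and> braid_gen y < n"
  shows "num_loops n (xs @ x # x # ys) (sa @ True # True # sb) = Suc (num_loops n (xs @ x # ys) (sa @ True # sb))"
proof -
  let ?G = "\<lambda>c. braid_gen ((xs @ x # ys) ! c)" and ?B = "(!) (sa @ True # sb)"
  have "\<forall>c<length (xs @ x # ys). 1 \<le> ?G c \<and> ?G c < n"
    using bounded unfolding all_set_conv_all_nth .
  moreover have "?G (length xs) = braid_gen x" "?B (length xs)"
    using assms(1) by (simp_all add: nth_append)
  ultimately have "card (components (resolution_edge n (Suc (length (xs @ x # ys)))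
        (insert_at (length xs) (braid_gen x) ?G) (insert_at (length xs) True ?B))
        (diagram_vertices n (Suc (length (xs @ x # ys)))))
      = card (components (resolution_edge n (length (xs @ x # ys)) ?G ?B)
          (diagram_vertices n (length (xs @ x # ys)))) + 1"
    using card_components_insert_double[of "length xs" "length (xs @ x # ys)" ?B ?G n] by simp
  moreover have "length (xs @ x # x # ys) = Suc (length (xs @ x # ys))" by simp
  moreover have "(\<lambda>c. braid_gen ((xs @ x # x # ys) ! c)) = insert_at (length xs) (braid_gen x) ?G"
    using nth_append_Cons_eq_insert_at[of xs "length xs" braid_gen x "x # ys"] by simp
  moreover have "(!) (sa @ True # True # sb) = insert_at (length xs) True ?B"
    using nth_append_Cons_eq_insert_at[of sa "length xs" "\<lambda>b. b" True "True # sb"] assms(1) by simp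
  ultimately show ?thesis
    unfolding num_loops_eq_card_components by simp
qed

lemma num_loops_double_letter:
  assumes "length sa = length xs" and bounded: "\<forall>y \<in> set (xs @ x # ys). 1 \<le> braid_gen y \<and> braid_gen y < n"
  shows "num_loops n (xs @ x # ys) (sa @ False # sb) = num_loops n (xs @ ys) (sa @ sb)"
    and "num_loops n (xs @ x # x # ys) (sa @ False # False # sb) = num_loops n (xs @ ys) (sa @ sb)"
    and "num_loops n (xs @ x # x # ys) (sa @ False # True # sb) = num_loops n (xs @ x # ys) (sa @ True # sb)"
    and "num_loops n (xs @ x # x # ys) (sa @ True # False # sb) = num_loops n (xs @ x # ys) (sa @ True # sb)"
    and "num_loops n (xs @ x # x # ys) (sa @ True # True # sb) = Suc (num_loops n (xs @ x # ys) (sa @ True # sb))"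
proof -
  have "\<forall>y \<in> set (xs @ ys). 1 \<le> braid_gen y \<and> braid_gen y < n"
    "\<forall>y \<in> set ((xs @ [x]) @ ys). 1 \<le> braid_gen y \<and> braid_gen y < n"
    using bounded by auto
  note shorter = num_loops_insert_identity[OF assms(1) this(1)]
    num_loops_insert_identity[of "sa @ [True]" "xs @ [x]", OF _ this(2)]
  show "num_loops n (xs @ x # ys) (sa @ False # sb) = num_loops n (xs @ ys) (sa @ sb)"
    by (rule shorter(1))
  show "num_loops n (xs @ x # x # ys) (sa @ False # False # sb) = num_loops n (xs @ ys) (sa @ sb)"
    using num_loops_insert_identity[OF assms, of x "False # sb"] shorter(1) by simp
  show "num_loops n (xs @ x # x # ys) (sa @ False # True # sb) = num_loops n (xs @ x # ys) (sa @ True # sb)"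
    using num_loops_insert_identity[OF assms, of x "True # sb"] by simp
  show "num_loops n (xs @ x # x # ys) (sa @ True # False # sb) = num_loops n (xs @ x # ys) (sa @ True # sb)"
    using shorter(2) assms(1) by simp
  show "num_loops n (xs @ x # x # ys) (sa @ True # True # sb) = Suc (num_loops n (xs @ x # ys) (sa @ True # sb))"
    using assms by (rule num_loops_insert_double)
qed

section \<open>The state sum and the skein relation\<close>

definition smoothing_weight :: "int list \<Rightarrow> bool list \<Rightarrow> int fls" where
  "smoothing_weight w st = prod_list (map2 smooth_wt w st)"

lemma smoothing_weight_append:
  "length sa = length xs \<Longrightarrow> smoothing_weight (xs @ ys) (sa @ sb) = smoothing_weight xs sa * smoothing_weight ys sb"
  by (simp add: smoothing_weight_def zip_append)

lemma smoothing_weight_Cons: "smoothing_weight (x # xs) (b # sa) = smooth_wt x b * smoothing_weight xs sa"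
  by (simp add: smoothing_weight_def)

lemma smoothing_weight_eq_prod:
  "length st = length w \<Longrightarrow> smoothing_weight w st = (\<Prod>c<length w. smooth_wt (w ! c) (st ! c))"
proof (induction w arbitrary: st)
  case (Cons x w)
  then obtain b st' where "st = b # st'" "length st' = length w" by (cases st) auto
  with Cons.IH show ?case
    by (simp add: smoothing_weight_Cons prod.lessThan_Suc_shift del: prod.lessThan_Suc)
qed (simp add: smoothing_weight_def)

lemma jones_braid_state_sum:
  "jones_braid n w = (\<Sum>st | length st = length w. smoothing_weight w st * loop_val ^ (num_loops n w st - 1))"
  unfolding jones_braid_def by (rule sum.cong) (simp_all add: smoothing_weight_eq_prod)

lemma sum_lists_length_append:
  "(\<Sum>st | length st = a + b. f st) = (\<Sum>xs | length xs = a. \<Sum>ys | length ys = b. f (xs @ ys))"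
proof -
  have bij: "bij_betw (\<lambda>(xs, ys). xs @ ys) ({xs. length xs = a} \<times> {ys. length ys = b}) {st. length st = a + b}"
    by (rule bij_betw_byWitness[where f' = "\<lambda>st. (take a st, drop a st)"]) auto
  have "(\<Sum>st | length st = a + b. f st) = (\<Sum>(xs, ys) \<in> {xs. length xs = a} \<times> {ys. length ys = b}. f (xs @ ys))"
    using sum.reindex_bij_betw[OF bij, of f] by (simp add: case_prod_unfold)
  also have "\<dots> = (\<Sum>xs | length xs = a. \<Sum>ys | length ys = b. f (xs @ ys))"
    by (rule sum.cartesian_product[symmetric])
  finally show ?thesis .
qed

lemma sum_bool_lists_length_Suc:
  "(\<Sum>st | length st = Suc a. f st) = (\<Sum>st | length st = a. f (False # st) + f (True # st))"
proof -
  have "(\<Sum>st | length st = Suc a. f st) = (\<Sum>u | length u = 1. \<Sum>st | length st = a. f (u @ st))"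
    using sum_lists_length_append[where a = 1 and b = a and f = f] by simp
  also have "{u :: bool list. length u = 1} = {[False], [True]}"
    by (auto simp: length_Suc_conv)
  finally show ?thesis by (simp add: sum.distrib)
qed

lemma jones_braid_split_at:
  "jones_braid n (xs @ zs @ ys) =
     (\<Sum>sa | length sa = length xs. \<Sum>u | length u = length zs. \<Sum>sb | length sb = length ys.
        smoothing_weight xs sa * smoothing_weight zs u * smoothing_weight ys sb
          * loop_val ^ (num_loops n (xs @ zs @ ys) (sa @ u @ sb) - 1))"
proof -
  have len: "length (xs @ zs @ ys) = length xs + (length zs + length ys)" by simp
  show ?thesis
    unfolding jones_braid_state_sum len sum_lists_length_append
    by (intro sum.cong refl) (simp add: smoothing_weight_append mult.assoc)
qed

lemma skein_weight_identity:
  "jS^2 * X + jS^3 * Y + (jS^3 * Y + jS^4 * (loop_val * Y)) = (jS^3 - jS) * (- jS * X + - (jS^2 * Y)) + jS^4 * X"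
proof -
  have "jS * jSinv = (1 :: int fls)"
    by (simp add: fls_X_inv_times_conv_shift fls_X_conv_shift_1)
  then have "jS ^ 4 * jSinv = (jS ^ 3 :: int fls)"
    by (simp add: power_numeral_reduce mult_ac)
  then show ?thesis
    by (simp add: loop_val_def algebra_simps power_numeral_reduce)
qed

lemma jones_braid_skein:
  assumes "0 < x" and bounded: "\<forall>y \<in> set (xs @ x # ys). 1 \<le> braid_gen y \<and> braid_gen y < n"
  shows "jones_braid n (xs @ x # x # ys) = (jS^3 - jS) * jones_braid n (xs @ x # ys) + jS^4 * jones_braid n (xs @ ys)"
proof -
  define t where "t zs u sa sb = smoothing_weight xs sa * smoothing_weight zs u * smoothing_weight ys sb
      * loop_val ^ (num_loops n (xs @ zs @ ys) (sa @ u @ sb) - 1)" for zs u sa sb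
  have split: "jones_braid n (xs @ zs @ ys) =
      (\<Sum>sa | length sa = length xs. \<Sum>u | length u = length zs. \<Sum>sb | length sb = length ys. t zs u sa sb)" for zs
    unfolding t_def by (rule jones_braid_split_at)
  have local_skein:
    "t [x, x] [False, False] sa sb + t [x, x] [True, False] sa sb + (t [x, x] [False, True] sa sb + t [x, x] [True, True] sa sb)
      = (jS^3 - jS) * (t [x] [False] sa sb + t [x] [True] sa sb) + jS^4 * t [] [] sa sb"
    if "length sa = length xs" for sa sb
  proof -
    define N1 where "N1 = num_loops n (xs @ x # ys) (sa @ True # sb)"
    define X where "X = smoothing_weight xs sa * smoothing_weight ys sb * loop_val ^ (num_loops n (xs @ ys) (sa @ sb) - 1)"
    define Y where "Y = smoothing_weight xs sa * smoothing_weight ys sb * loop_val ^ (N1 - 1)"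
    have "1 \<le> N1" using num_loops_pos[of n] bounded by (auto simp: N1_def)
    then have "loop_val ^ (Suc N1 - 1) = loop_val * loop_val ^ (N1 - 1)"
      by (simp add: power_eq_if)
    moreover have "smooth_wt x False = - jS" "smooth_wt x True = - (jS ^ 2)"
      using assms(1) by (simp_all add: smooth_wt_def)
    ultimately have
      "t [x, x] [False, False] sa sb = jS^2 * X" "t [x, x] [True, False] sa sb = jS^3 * Y"
      "t [x, x] [False, True] sa sb = jS^3 * Y" "t [x, x] [True, True] sa sb = jS^4 * (loop_val * Y)"
      "t [x] [False] sa sb = - jS * X" "t [x] [True] sa sb = - (jS^2 * Y)" "t [] [] sa sb = X"
      using num_loops_double_letter[OF that bounded, of sb]
      by (simp_all add: t_def X_def Y_def N1_def smoothing_weight_def algebra_simps power_numeral_reduce)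
    then show ?thesis
      by (simp only: skein_weight_identity)
  qed
  have "jones_braid n (xs @ x # x # ys) = (\<Sum>sa | length sa = length xs. \<Sum>sb | length sb = length ys.
      t [x, x] [False, False] sa sb + t [x, x] [True, False] sa sb + (t [x, x] [False, True] sa sb + t [x, x] [True, True] sa sb))"
    using split[of "[x, x]"] by (simp add: numeral_2_eq_2 sum_bool_lists_length_Suc sum.distrib)
  also have "\<dots> = (\<Sum>sa | length sa = length xs. \<Sum>sb | length sb = length ys.
      (jS^3 - jS) * (t [x] [False] sa sb + t [x] [True] sa sb) + jS^4 * t [] [] sa sb)"
    using local_skein by (intro sum.cong) auto
  also have "\<dots> = (jS^3 - jS) * jones_braid n (xs @ x # ys) + jS^4 * jones_braid n (xs @ ys)"
    using split[of "[x]"] split[of "[]"]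
    by (simp add: sum_bool_lists_length_Suc sum.distrib sum_distrib_left distrib_left)
  finally show ?thesis .
qed

section \<open>Generating series\<close>

lemma sum_Cons_image:
  "(\<Sum>c \<in> (\<lambda>(y, b). y # b) ` (A \<times> B). f c) = (\<Sum>y\<in>A. \<Sum>b\<in>B. f (y # b))"
proof -
  have "inj_on (\<lambda>(y, b). y # b) (A \<times> B)" by (rule inj_onI) auto
  then show ?thesis
    by (simp add: sum.reindex sum.cartesian_product case_prod_unfold)
qed

lemma dominated_lists_Cons:
  fixes x :: nat
  shows "{b. length b = length (x # a) \<and> (\<forall>j<length (x # a). b ! j \<le> (x # a) ! j)}
     = (\<lambda>(y, b). y # b) ` ({0..x} \<times> {b. length b = length a \<and> (\<forall>j<length a. b ! j \<le> a ! j)})"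
    (is "?L = ?R")
proof (intro equalityI subsetI)
  fix c assume "c \<in> ?L"
  then obtain y b where c: "c = y # b" and "length b = length a"
    and "\<forall>j<Suc (length a). (y # b) ! j \<le> (x # a) ! j"
    by (cases c) auto
  then have "y \<le> x" "\<forall>j<length a. b ! j \<le> a ! j"
    unfolding All_less_Suc2 by simp_all
  then show "c \<in> ?R"
    using c \<open>length b = length a\<close> by (intro image_eqI[where x = "(y, b)"]) simp_all
next
  fix c assume "c \<in> ?R"
  then obtain y b where "c = y # b" "y \<le> x" "length b = length a" "\<forall>j<length a. b ! j \<le> a ! j"
    by auto
  then show "c \<in> ?L" unfolding mem_Collect_eq length_Cons All_less_Suc2 by simp
qed

lemma finite_dominated_lists:
  fixes a :: "nat list"
  shows "finite {b. length b = length a \<and> (\<forall>j<length a. b ! j \<le> a ! j)}"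
proof (induction a)
  case (Cons x a)
  then show ?case unfolding dominated_lists_Cons by simp
qed simp

lemma lists_over_Suc:
  "{J. length J = Suc k \<and> set J \<subseteq> Z} = (\<lambda>(y, b). y # b) ` (Z \<times> {J. length J = k \<and> set J \<subseteq> Z})"
  by (auto simp: length_Suc_conv)

lemma q_poly_eq: "q_poly = [:1, jS - jS^3, - (jS^4):]"
  by (simp add: q_poly_def algebra_simps power_numeral_reduce)

text \<open>\<open>q\<close> is the characteristic polynomial of the skein recurrence, so its convolution with a
  solution \<open>G\<close> vanishes from degree 2 on.\<close>

lemma q_poly_convolution:
  assumes recurrence: "\<And>e. G (e + 2) = (jS^3 - jS) * G (e + 1) + jS^4 * G e"
  shows "(\<Sum>y\<in>{0..x}. coeff q_poly y * G (x - y)) = (\<Sum>z\<in>{0, 1}. coeff (Q_poly z) x * G z)"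
proof (cases "x < 2")
  case True
  then consider "x = 0" | "x = 1" by linarith
  then show ?thesis
    by cases (simp_all add: q_poly_eq Q_poly_def atLeast0_atMost_Suc)
next
  case False
  then obtain e where x: "x = e + 2" by (metis add.commute le_Suc_ex not_less)
  have "(\<Sum>y\<in>{0..x}. coeff q_poly y * G (x - y)) = (\<Sum>y\<in>{0..2}. coeff q_poly y * G (x - y))"
    by (rule sum.mono_neutral_right) (auto simp: x q_poly_eq coeff_pCons split: nat.split)
  also have "\<dots> = G (e + 2) + (jS - jS^3) * G (e + 1) - jS^4 * G e"
    by (simp add: q_poly_eq x atLeast0_atMost_Suc numeral_2_eq_2)
  also have "\<dots> = 0"
    using recurrence[of e] by (simp add: algebra_simps)
  finally show ?thesis
    by (simp add: Q_poly_def x)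
qed

lemma separable_convolution:
  fixes p :: "'a::comm_ring_1 poly" and Q :: "nat \<Rightarrow> 'a poly" and F :: "nat list \<Rightarrow> 'a"
  assumes univariate: "\<And>G x. R G \<Longrightarrow> (\<Sum>y\<in>{0..x}. coeff p y * G (x - y)) = (\<Sum>z\<in>Z. coeff (Q z) x * G z)"
    and sections: "\<And>l1 l2. length l1 + length l2 + 1 = length a \<Longrightarrow> R (\<lambda>e. F (l1 @ e # l2))"
  shows "(\<Sum>b | length b = length a \<and> (\<forall>j<length a. b ! j \<le> a ! j).
            (\<Prod>j<length a. coeff p (b ! j)) * F (map2 (-) a b))
       = (\<Sum>J | length J = length a \<and> set J \<subseteq> Z. F J * (\<Prod>j<length a. coeff (Q (J ! j)) (a ! j)))"
  using sections
proof (induction a arbitrary: F)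
  case Nil
  have "{J. J = [] \<and> set J \<subseteq> Z} = {[]}" by auto
  then show ?case by simp
next
  case (Cons x a)
  define Dom where "Dom = {b. length b = length a \<and> (\<forall>j<length a. b ! j \<le> a ! j)}"
  define P where "P b = (\<Prod>j<length a. coeff p (b ! j))" for b
  have "(\<Sum>b | length b = length (x # a) \<and> (\<forall>j<length (x # a). b ! j \<le> (x # a) ! j).
            (\<Prod>j<length (x # a). coeff p (b ! j)) * F (map2 (-) (x # a) b))
      = (\<Sum>y\<in>{0..x}. \<Sum>b\<in>Dom. coeff p y * P b * F ((x - y) # map2 (-) a b))"
    unfolding dominated_lists_Cons sum_Cons_image Dom_def P_def
    by (intro sum.cong refl) (simp add: prod.lessThan_Suc_shift del: prod.lessThan_Suc)
  also have "\<dots> = (\<Sum>b\<in>Dom. P b * (\<Sum>y\<in>{0..x}. coeff p y * F ((x - y) # map2 (-) a b)))"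
    by (subst sum.swap) (simp add: sum_distrib_left mult_ac)
  also have "\<dots> = (\<Sum>b\<in>Dom. P b * (\<Sum>z\<in>Z. coeff (Q z) x * F (z # map2 (-) a b)))"
  proof (rule sum.cong[OF refl])
    fix b assume "b \<in> Dom"
    then have "length (map2 (-) a b) = length a" by (simp add: Dom_def)
    then have recurrent: "R (\<lambda>e. F (e # map2 (-) a b))"
      using Cons.prems[of "[]" "map2 (-) a b"] by simp
    show "P b * (\<Sum>y\<in>{0..x}. coeff p y * F ((x - y) # map2 (-) a b))
             = P b * (\<Sum>z\<in>Z. coeff (Q z) x * F (z # map2 (-) a b))"
      using univariate[OF recurrent, of x] by simp
  qed
  also have "\<dots> = (\<Sum>z\<in>Z. coeff (Q z) x * (\<Sum>b\<in>Dom. P b * F (z # map2 (-) a b)))"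
    unfolding sum_distrib_left by (subst sum.swap) (simp add: mult_ac)
  also have "\<dots> = (\<Sum>z\<in>Z. coeff (Q z) x *
      (\<Sum>J | length J = length a \<and> set J \<subseteq> Z. F (z # J) * (\<Prod>j<length a. coeff (Q (J ! j)) (a ! j))))"
  proof (rule sum.cong[OF refl])
    fix z
    have "(\<Sum>b\<in>Dom. P b * F (z # map2 (-) a b)) =
        (\<Sum>J | length J = length a \<and> set J \<subseteq> Z. F (z # J) * (\<Prod>j<length a. coeff (Q (J ! j)) (a ! j)))"
      unfolding Dom_def P_def
      by (rule Cons.IH[where F = "\<lambda>l. F (z # l)"]) (use Cons.prems[of "z # _"] in simp)
    then show "coeff (Q z) x * (\<Sum>b\<in>Dom. P b * F (z # map2 (-) a b)) = coeff (Q z) x *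
        (\<Sum>J | length J = length a \<and> set J \<subseteq> Z. F (z # J) * (\<Prod>j<length a. coeff (Q (J ! j)) (a ! j)))"
      by simp
  qed
  also have "\<dots> = (\<Sum>J | length J = length (x # a) \<and> set J \<subseteq> Z.
      F J * (\<Prod>j<length (x # a). coeff (Q (J ! j)) ((x # a) ! j)))"
    unfolding length_Cons lists_over_Suc sum_Cons_image
    by (simp add: sum_distrib_left prod.lessThan_Suc_shift mult_ac del: prod.lessThan_Suc)
  finally show ?case .
qed

lemma mps_mult_upoly:
  assumes "j < k" "length b = k"
  shows "mps_mult k (mps_upoly k j p) H b = (\<Sum>x\<in>{0..b ! j}. coeff p x * H (b[j := b ! j - x]))"
proof -
  define Dom where "Dom = {c. length c = k \<and> (\<forall>i<k. c ! i \<le> b ! i)}"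
  define e where "e x = (replicate k (0::nat))[j := x]" for x
  have e_nth: "e x ! i = (if i = j then x else 0)" if "i < k" for x i
    using that assms(1) by (simp add: e_def)
  have length_e: "length (e x) = k" for x by (simp add: e_def)
  have "finite Dom"
    using finite_dominated_lists[of b] assms(2) by (simp add: Dom_def)
  have "mps_mult k (mps_upoly k j p) H b = (\<Sum>c\<in>Dom. mps_upoly k j p c * H (map (\<lambda>i. b ! i - c ! i) [0..<k]))"
    by (simp add: mps_mult_def Dom_def)
  also have "\<dots> = (\<Sum>c\<in>e ` {0..b ! j}. mps_upoly k j p c * H (map (\<lambda>i. b ! i - c ! i) [0..<k]))"
  proof (rule sum.mono_neutral_right[OF \<open>finite Dom\<close>])
    show "e ` {0..b ! j} \<subseteq> Dom"
      using e_nth length_e by (auto simp: Dom_def)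
    show "\<forall>c\<in>Dom - e ` {0..b ! j}. mps_upoly k j p c * H (map (\<lambda>i. b ! i - c ! i) [0..<k]) = 0"
    proof
      fix c assume c: "c \<in> Dom - e ` {0..b ! j}"
      have "\<not> (\<forall>l<k. l \<noteq> j \<longrightarrow> c ! l = 0)"
      proof
        assume "\<forall>l<k. l \<noteq> j \<longrightarrow> c ! l = 0"
        then have "c = e (c ! j)"
          using c e_nth length_e by (intro nth_equalityI) (auto simp: Dom_def)
        then show False using c assms(1) by (auto simp: Dom_def)
      qed
      then show "mps_upoly k j p c * H (map (\<lambda>i. b ! i - c ! i) [0..<k]) = 0"
        unfolding mps_upoly_def by (simp only: if_False mult_zero_left)
    qed
  qed
  also have "\<dots> = (\<Sum>x\<in>{0..b ! j}. mps_upoly k j p (e x) * H (map (\<lambda>i. b ! i - e x ! i) [0..<k]))"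
  proof (rule sum.reindex_cong[where l = e])
    show "inj_on e {0..b ! j}"
      using e_nth[OF assms(1)] by (intro inj_onI) metis
  qed simp_all
  also have "\<dots> = (\<Sum>x\<in>{0..b ! j}. coeff p x * H (b[j := b ! j - x]))"
  proof (rule sum.cong[OF refl])
    fix x
    have "map (\<lambda>i. b ! i - e x ! i) [0..<k] = b[j := b ! j - x]"
      using assms e_nth by (intro nth_equalityI) auto
    then show "mps_upoly k j p (e x) * H (map (\<lambda>i. b ! i - e x ! i) [0..<k]) = coeff p x * H (b[j := b ! j - x])"
      using e_nth assms(1) by (simp add: mps_upoly_def)
  qed
  finally show ?thesis .
qed

lemma mps_foldr_upoly:
  assumes "distinct js" "\<forall>j\<in>set js. j < k" "length b = k"
  shows "foldr (mps_mult k) (map (\<lambda>j. mps_upoly k j (p j)) js) (mps_one k) b =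
     (if \<forall>l<k. l \<notin> set js \<longrightarrow> b ! l = 0 then \<Prod>j\<in>set js. coeff (p j) (b ! j) else 0)"
  using assms
proof (induction js arbitrary: b)
  case Nil
  have "b = replicate k 0 \<longleftrightarrow> (\<forall>l<k. b ! l = 0)"
    using Nil.prems(3) by (auto simp: list_eq_iff_nth_eq)
  then show ?case by (simp add: mps_one_def)
next
  case (Cons j js)
  have j: "j < k" "j \<notin> set js" using Cons.prems by auto
  define H where "H = foldr (mps_mult k) (map (\<lambda>j. mps_upoly k j (p j)) js) (mps_one k)"
  have IH: "H c = (if \<forall>l<k. l \<notin> set js \<longrightarrow> c ! l = 0 then \<Prod>j\<in>set js. coeff (p j) (c ! j) else 0)"
    if "length c = k" for c
    unfolding H_def using Cons.IH[OF _ _ that] Cons.prems by simp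
  have "foldr (mps_mult k) (map (\<lambda>j. mps_upoly k j (p j)) (j # js)) (mps_one k) b
      = (\<Sum>x\<in>{0..b ! j}. coeff (p j) x * H (b[j := b ! j - x]))"
    using mps_mult_upoly[OF j(1) Cons.prems(3)] by (simp add: H_def)
  also have "\<dots> = coeff (p j) (b ! j) * H (b[j := 0])"
  proof -
    have "H (b[j := b ! j - x]) = 0" if "x \<in> {0..<b ! j}" for x
      using IH[of "b[j := b ! j - x]"] that j Cons.prems(3) by auto
    then show ?thesis
      by (simp add: atLeastLessThanSuc_atLeastAtMost[symmetric] sum.atLeast0_lessThan_Suc)
  qed
  also have "\<dots> = (if \<forall>l<k. l \<notin> set (j # js) \<longrightarrow> b ! l = 0 then \<Prod>i\<in>set (j # js). coeff (p i) (b ! i) else 0)"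
  proof -
    have update: "b[j := 0] ! l = (if l = j then 0 else b ! l)" if "l < k" for l
      using that Cons.prems(3) by simp
    have "(\<Prod>i\<in>set js. coeff (p i) (b[j := 0] ! i)) = (\<Prod>i\<in>set js. coeff (p i) (b ! i))"
      using update j Cons.prems(2) by (intro prod.cong refl) auto
    then show ?thesis
      using IH[of "b[j := 0]"] Cons.prems(3) update j by auto
  qed
  finally show ?case .
qed

lemma mps_prod_list_upoly:
  "length b = k \<Longrightarrow>
     mps_prod_list k (map (\<lambda>j. mps_upoly k j (p j)) [0..<k]) b = (\<Prod>j<k. coeff (p j) (b ! j))"
  unfolding mps_prod_list_def by (simp add: mps_foldr_upoly atLeast0LessThan)

lemma mps_mult_prod_upoly:
  assumes "length a = k"
  shows "mps_mult k (mps_prod_list k (map (\<lambda>j. mps_upoly k j p) [0..<k])) F a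
       = (\<Sum>b | length b = length a \<and> (\<forall>j<length a. b ! j \<le> a ! j).
           (\<Prod>j<length a. coeff p (b ! j)) * F (map2 (-) a b))"
  unfolding mps_mult_def assms[symmetric]
  by (intro sum.cong refl arg_cong2[where f = "(*)"])
     (auto simp: mps_prod_list_upoly intro!: arg_cong[where f = F] nth_equalityI)

lemma pow_word_eq_concat_map2:
  "length a = length I \<Longrightarrow> pow_word I a = concat (map2 (\<lambda>i e. replicate e (int i)) I a)"
  unfolding pow_word_def by (rule arg_cong[where f = concat]) (rule nth_equalityI, auto)

lemma jones_series_recurrence:
  assumes bounded: "\<forall>i\<in>set I. 1 \<le> i \<and> i < n" and "length l1 + length l2 + 1 = length I"
  shows "jones_series n I (l1 @ (e + 2) # l2) =
    (jS^3 - jS) * jones_series n I (l1 @ (e + 1) # l2) + jS^4 * jones_series n I (l1 @ e # l2)"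
proof -
  define I1 where "I1 = take (length l1) I"
  define I2 where "I2 = drop (Suc (length l1)) I"
  define i where "i = I ! length l1"
  have I: "I = I1 @ i # I2" and "length I1 = length l1"
    using assms(2) by (simp_all add: I1_def I2_def i_def id_take_nth_drop)
  define P1 where "P1 = concat (map2 (\<lambda>i e. replicate e (int i)) I1 l1)"
  define P2 where "P2 = concat (map2 (\<lambda>i e. replicate e (int i)) I2 l2)"
  have word: "pow_word I (l1 @ m # l2) = P1 @ replicate m (int i) @ P2" for m
    using assms(2) \<open>length I1 = length l1\<close>
    by (subst pow_word_eq_concat_map2) (simp_all add: I P1_def P2_def zip_append)
  have "set P1 \<union> set P2 \<union> {int i} \<subseteq> int ` set I"
    by (auto simp: P1_def P2_def I dest!: set_zip_leftD)
  then have "0 < int i"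
    and "\<forall>y \<in> set ((P1 @ replicate e (int i)) @ int i # P2). 1 \<le> braid_gen y \<and> braid_gen y < n"
    using bounded by (auto simp: braid_gen_def I)
  then have skein: "jones_braid n ((P1 @ replicate e (int i)) @ int i # int i # P2) =
      (jS^3 - jS) * jones_braid n ((P1 @ replicate e (int i)) @ int i # P2) + jS^4 * jones_braid n ((P1 @ replicate e (int i)) @ P2)"
    by (rule jones_braid_skein)
  have "replicate (e + 2) (int i) = replicate e (int i) @ [int i, int i]"
    "replicate (e + 1) (int i) = replicate e (int i) @ [int i]"
    by (induction e) simp_all
  then show ?thesis
    using skein unfolding jones_series_def word by (simp only: append_assoc append_Cons append_Nil)
qed

theorem theorem1p3:
  fixes n k :: nat and I :: "nat list"
  assumes "n \<ge> 2" and "k \<ge> 1" and "length I = k"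
    and "\<forall>i \<in> set I. 1 \<le> i \<and> i \<le> n - 1"
  shows "mps_eq k
           (mps_mult k (mps_prod_list k (map (\<lambda>j. mps_upoly k j q_poly) [0..<k]))
                       (jones_series n I))
           (\<lambda>a. \<Sum>J \<in> {J :: nat list. length J = k \<and> set J \<subseteq> {0, 1}}.
              mps_smult (jones_braid n (pow_word I J))
                        (mps_prod_list k (map (\<lambda>j. mps_upoly k j (Q_poly (J ! j))) [0..<k])) a)"
  unfolding mps_eq_def
proof (intro allI impI)
  fix a :: "nat list" assume a: "length a = k"
  have bounded: "\<forall>i\<in>set I. 1 \<le> i \<and> i < n" using assms(1,4) by auto
  have "mps_mult k (mps_prod_list k (map (\<lambda>j. mps_upoly k j q_poly) [0..<k])) (jones_series n I) a
      = (\<Sum>J | length J = length a \<and> set J \<subseteq> {0, 1}.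
           jones_series n I J * (\<Prod>j<length a. coeff (Q_poly (J ! j)) (a ! j)))"
    unfolding mps_mult_prod_upoly[OF a]
    by (rule separable_convolution[where R = "\<lambda>G. \<forall>e. G (e + 2) = (jS^3 - jS) * G (e + 1) + jS^4 * G e"])
       (use q_poly_convolution jones_series_recurrence[OF bounded] a assms(3) in auto)
  then show "mps_mult k (mps_prod_list k (map (\<lambda>j. mps_upoly k j q_poly) [0..<k])) (jones_series n I) a
      = (\<Sum>J \<in> {J. length J = k \<and> set J \<subseteq> {0, 1}}.
           mps_smult (jones_braid n (pow_word I J))
             (mps_prod_list k (map (\<lambda>j. mps_upoly k j (Q_poly (J ! j))) [0..<k])) a)"
    by (simp add: a mps_smult_def mps_prod_list_upoly jones_series_def)
qed

end
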